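(* Let $N\ge1$, and for a parameter vector $h=(h_\alpha,h_\beta,h_1,\dots,h_{N-1})\in\mathbb{R}^{N+1}$ consider the linear system $\dot{\mathbf x}=A(h)\mathbf x+B\delta(t)$, $y=C\mathbf x$, with $A(h)$ as in the context, $B=e_1$ and $C=e_2^T$, whose input–output behaviour is the transfer function $G_h(s)=C(sI-A(h))^{-1}B$ (equivalently the impulse response $y_h(t)=Ce^{A(h)t}B$, $t\ge0$). Then there is a Lebesgue-null set $\mathcal{Z}\subset\mathbb{R}^{N+1}$ such that for all $h,h'\notin\mathcal Z$ with known (designed) sensor couplings $h_\alpha=h'_\alpha$, $h_\beta=h'_\beta$, the equality $G_h(s)=G_{h'}(s)$ (for all $s$) implies $|h_i|=|h'_i|$ for all $i=1,\dots,N-1$. That is, the magnitudes of the chain couplings $h_1,\dots,h_{N-1}$ are uniquely determined by the measurement record of $Z_\alpha Y_\beta$ with initial state $\rho^x_\alpha\otimes\frac I2$.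
   Context: For an integer $N\ge1$ and real parameters $h=(h_\alpha,h_\beta,h_1,\dots,h_{N-1})$, set $(c_1,c_2,c_3,\dots,c_{N+1})=(h_\alpha,h_\beta,h_1,\dots,h_{N-1})$ and let $A(h)$ be the real $(N+2)\times(N+2)$ tridiagonal matrix with $A_{j,j+1}=c_j$, $A_{j+1,j}=-c_j$ for $j=1,\dots,N+1$ and all other entries zero. $e_j$ denotes the $j$-th standard basis column vector. Physically, this is the Heisenberg-picture dynamics $\frac{d}{dt}\langle O\rangle=\langle \mathrm{i}[H,O]\rangle$ of the expectation vector $\mathbf x=(\langle X_\alpha\rangle,\langle Z_\alpha Y_\beta\rangle,\langle Z_\alpha Z_\beta X_1\rangle,\langle Z_\alpha Z_\beta Z_1Y_2\rangle,\dots)$ for the chain of qubits $\alpha,\beta,1,\dots,N$ with Hamiltonian $H=\frac{h_\alpha}{2}(X_\alpha X_\beta+Y_\alpha Y_\beta)+\frac{h_\beta}{2}(X_\beta X_1+Y_\beta Y_1)+\sum_{k=1}^{N-1}\frac{h_k}{2}(X_kX_{k+1}+Y_kY_{k+1})$, where $X,Y,Z$ are Pauli matrices and $\rho^x_\alpha=(I+X)/2$ on qubit $\alpha$. *)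

theory Defs
  imports "HOL-Analysis.Analysis" "Jordan_Normal_Form.Gauss_Jordan_Elimination"
begin

text \<open>Parameters h :: nat => real, with h 0 = h_alpha, h 1 = h_beta, h (k+1) = h_k for k = 1..N-1.
  Matrices are 0-indexed: row/column i corresponds to the paper's index i+1.\<close>

definition coupling_mat :: "nat \<Rightarrow> (nat \<Rightarrow> real) \<Rightarrow> complex mat" where
  "coupling_mat N h = mat (N+2) (N+2)
     (\<lambda>(i,j). if j = i + 1 then complex_of_real (h i)
              else if i = j + 1 then - complex_of_real (h j) else 0)"

definition resolvent_arg :: "nat \<Rightarrow> (nat \<Rightarrow> real) \<Rightarrow> complex \<Rightarrow> complex mat" where
  "resolvent_arg N h s = s \<cdot>\<^sub>m 1\<^sub>m (N+2) - coupling_mat N h"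

text \<open>Transfer function G_h(s) = C (sI - A(h))^{-1} B with B = e_1, C = e_2^T,
  defined at points s where sI - A(h) is invertible (value 0 elsewhere, never used).\<close>
definition transfer_fn :: "nat \<Rightarrow> (nat \<Rightarrow> real) \<Rightarrow> complex \<Rightarrow> complex" where
  "transfer_fn N h s =
     (case mat_inverse (resolvent_arg N h s) of
        Some Mi \<Rightarrow> (Mi *\<^sub>v unit_vec (N+2) 0) $ 1
      | None \<Rightarrow> 0)"

end

theory Submission
  imports Defs "Jordan_Normal_Form.Determinant"
begin

text \<open>Write \<open>D\<^sub>k\<close> for the characteristic polynomial of the trailing block of \<open>A(h)\<close> with indices
  \<open>k, \<dots>, N+1\<close>. Cramer's rule gives \<open>G\<^sub>h(s) = -h\<^sub>\<alpha> D\<^sub>2(s) / D\<^sub>0(s)\<close>, and \<open>sI - A(h)\<close> is invertible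
  for real \<open>s > 0\<close> because \<open>A(h)\<close> is antisymmetric. Expanding along the first row gives the
  three-term recurrence \<open>D\<^sub>k = s D\<^sub>k\<^sub>+\<^sub>1 + h\<^sub>k\<^sup>2 D\<^sub>k\<^sub>+\<^sub>2\<close> with monic \<open>D\<^sub>k\<close>, i.e. the continued fraction
  \<open>D\<^sub>k/D\<^sub>k\<^sub>+\<^sub>1 = s + h\<^sub>k\<^sup>2/(D\<^sub>k\<^sub>+\<^sub>1/D\<^sub>k\<^sub>+\<^sub>2)\<close>. Equal transfer functions with equal \<open>h\<^sub>\<alpha>\<close> force
  \<open>D\<^sub>1/D\<^sub>2 = D'\<^sub>1/D'\<^sub>2\<close>; comparing leading coefficients then peels off \<open>h\<^sub>k\<^sup>2 = h'\<^sub>k\<^sup>2\<close> one level at a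
  time, which needs \<open>h\<^sub>k \<noteq> 0\<close>. The exceptional set is the union of the coordinate hyperplanes.\<close>

section \<open>Continuants\<close>

text \<open>\<open>continuant N h k\<close> is the polynomial \<open>D\<^sub>k\<close>; the value \<open>0\<close> beyond the last index makes the
  recurrence valid at \<open>k = N+1\<close> too.\<close>

function continuant :: "nat \<Rightarrow> (nat \<Rightarrow> real) \<Rightarrow> nat \<Rightarrow> real poly" where
  "continuant N h k = (if N + 2 < k then 0 else if k = N + 2 then 1
      else [:0, 1:] * continuant N h (k + 1) + Polynomial.smult ((h k)\<^sup>2) (continuant N h (k + 2)))"
  by pat_completeness auto
termination by (relation "Wellfounded.measure (\<lambda>(N, h, k). N + 3 - k)") auto

declare continuant.simps [simp del]

lemma continuant_beyond: "N + 2 < k \<Longrightarrow> continuant N h k = 0"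
  by (subst continuant.simps) simp

lemma continuant_last: "continuant N h (N + 2) = 1"
  by (subst continuant.simps) simp

lemma continuant_rec:
  "k < N + 2 \<Longrightarrow>
    continuant N h k = [:0, 1:] * continuant N h (k + 1) + Polynomial.smult ((h k)\<^sup>2) (continuant N h (k + 2))"
  by (subst continuant.simps) simp

lemma monic_shift_add:
  fixes p q :: "'a::field poly"
  assumes "lead_coeff p = 1" and "degree q \<le> degree p"
  shows "degree ([:0, 1:] * p + q) = degree p + 1 \<and> lead_coeff ([:0, 1:] * p + q) = 1"
proof -
  have p: "p \<noteq> 0" using assms(1) by auto
  have deg: "degree ([:0, 1:] * p) = degree p + 1"
    using p by (simp add: degree_mult_eq)
  then have "degree q < degree ([:0, 1:] * p)" using assms(2) by simp
  then show ?thesis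
    using deg assms(1) by (simp add: degree_add_eq_left lead_coeff_mult coeff_eq_0)
qed

lemma continuant_monic:
  "k \<le> N + 2 \<Longrightarrow> degree (continuant N h k) = N + 2 - k \<and> lead_coeff (continuant N h k) = 1"
proof (induction "N + 2 - k" arbitrary: k rule: less_induct)
  case less
  show ?case
  proof (cases "k = N + 2")
    case True
    then show ?thesis using continuant_last[of N h] by simp
  next
    case False
    then have k: "k < N + 2" using less.prems by simp
    have "N + 2 - (k + 1) < N + 2 - k" "k + 1 \<le> N + 2" using k by auto
    from less.hyps[OF this] have IH1:
      "degree (continuant N h (k + 1)) = N + 2 - (k + 1)" "lead_coeff (continuant N h (k + 1)) = 1"
      by blast+
    have deg2: "degree (Polynomial.smult ((h k)\<^sup>2) (continuant N h (k + 2)))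
        \<le> degree (continuant N h (k + 1))"
    proof (cases "k + 2 \<le> N + 2")
      case True
      then have "degree (continuant N h (k + 2)) = N - k"
        using less.hyps[of "k + 2"] by simp
      then show ?thesis
        using IH1(1) degree_smult_le[of "(h k)\<^sup>2" "continuant N h (k + 2)"] by linarith
    qed (simp add: continuant_beyond)
    have "degree (continuant N h k) = degree (continuant N h (k + 1)) + 1
        \<and> lead_coeff (continuant N h k) = 1"
      unfolding continuant_rec[OF k, of h] by (rule monic_shift_add[OF IH1(2) deg2])
    moreover have "degree (continuant N h (k + 1)) + 1 = N + 2 - k"
      using IH1(1) k by simp
    ultimately show ?thesis by metis
  qed
qed

lemma lead_coeff_continuant: "k \<le> N + 2 \<Longrightarrow> lead_coeff (continuant N h k) = 1"
  using continuant_monic by blast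

section \<open>Peeling off the coefficients\<close>

lemma three_term_cross_step:
  fixes p1 p2 q1 q2 :: "'a::field poly"
  assumes "lead_coeff p1 = 1" "lead_coeff p2 = 1" "lead_coeff q1 = 1" "lead_coeff q2 = 1"
    and cross: "([:0, 1:] * p1 + Polynomial.smult a p2) * q1 = ([:0, 1:] * q1 + Polynomial.smult b q2) * p1"
  shows "a = b \<and> (a \<noteq> 0 \<longrightarrow> p1 * q2 = q1 * p2)"
proof -
  have E: "Polynomial.smult a (p2 * q1) = Polynomial.smult b (q2 * p1)"
    using cross by (simp add: algebra_simps)
  have "lead_coeff (p2 * q1) = 1" "lead_coeff (q2 * p1) = 1"
    using assms(1-4) by (simp_all add: lead_coeff_mult)
  then have ab: "a = b"
    using arg_cong[OF E, of lead_coeff] by (simp only: lead_coeff_smult) simp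
  moreover have "p1 * q2 = q1 * p2" if "a \<noteq> 0"
    using E that unfolding ab by (metis smult_cancel mult.commute)
  ultimately show ?thesis by blast
qed

definition same_tail_ratio :: "nat \<Rightarrow> (nat \<Rightarrow> real) \<Rightarrow> (nat \<Rightarrow> real) \<Rightarrow> nat \<Rightarrow> bool" where
  "same_tail_ratio N h h' k \<longleftrightarrow>
     continuant N h k * continuant N h' (k + 1) = continuant N h' k * continuant N h (k + 1)"

lemma same_tail_ratio_step:
  assumes "k \<le> N" and "same_tail_ratio N h h' k"
  shows "(h k)\<^sup>2 = (h' k)\<^sup>2 \<and> (h k \<noteq> 0 \<longrightarrow> same_tail_ratio N h h' (k + 1))"
  using three_term_cross_step[of "continuant N h (k + 1)" "continuant N h (k + 2)"
      "continuant N h' (k + 1)" "continuant N h' (k + 2)" "(h k)\<^sup>2" "(h' k)\<^sup>2"]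
    assms continuant_rec[of k N h] continuant_rec[of k N h'] lead_coeff_continuant[of _ N]
  unfolding same_tail_ratio_def by (simp add: mult.commute)

lemma same_tail_ratio_propagate:
  assumes "same_tail_ratio N h h' 1" and "\<forall>j\<in>{1..<k}. h j \<noteq> 0" and "1 \<le> k" "k \<le> N + 1"
  shows "same_tail_ratio N h h' k"
  using assms(3,4,2)
proof (induction k rule: dec_induct)
  case base
  show ?case by (rule assms(1))
next
  case (step k)
  then show ?case
    using same_tail_ratio_step[of k N h h'] by simp
qed

section \<open>The resolvent at positive real frequencies\<close>

definition coupling :: "(nat \<Rightarrow> real) \<Rightarrow> nat \<Rightarrow> nat \<Rightarrow> real" where
  "coupling h i j = (if j = i + 1 then h i else if i = j + 1 then - h j else 0)"

lemma coupling_mat_entry: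
  "i < N + 2 \<Longrightarrow> j < N + 2 \<Longrightarrow> coupling_mat N h $$ (i, j) = complex_of_real (coupling h i j)"
  unfolding coupling_mat_def coupling_def by simp

lemma coupling_mat_carrier: "coupling_mat N h \<in> carrier_mat (N + 2) (N + 2)"
  unfolding coupling_mat_def by simp

lemma resolvent_arg_carrier: "resolvent_arg N h s \<in> carrier_mat (N + 2) (N + 2)"
  unfolding resolvent_arg_def using coupling_mat_carrier[of N h] by (simp add: minus_carrier_mat)

lemma shift_mult_vec_index:
  fixes A :: "'a::comm_ring_1 mat"
  assumes "A \<in> carrier_mat n n" "v \<in> carrier_vec n" "i < n"
  shows "((s \<cdot>\<^sub>m 1\<^sub>m n - A) *\<^sub>v v) $ i = s * v $ i - (\<Sum>j<n. A $$ (i, j) * v $ j)"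
proof -
  have "((s \<cdot>\<^sub>m 1\<^sub>m n - A) *\<^sub>v v) $ i = (\<Sum>j<n. (if i = j then s * v $ j else 0) - A $$ (i, j) * v $ j)"
    using assms by (auto simp: scalar_prod_def atLeast0LessThan left_diff_distrib intro!: sum.cong)
  also have "\<dots> = s * v $ i - (\<Sum>j<n. A $$ (i, j) * v $ j)"
    using assms(3) by (simp add: sum_subtractf)
  finally show ?thesis .
qed

lemma skew_hermitian_form_Re_zero:
  fixes a :: "nat \<Rightarrow> nat \<Rightarrow> complex" and v :: "nat \<Rightarrow> complex"
  assumes skew: "\<And>i j. i < n \<Longrightarrow> j < n \<Longrightarrow> a j i = - cnj (a i j)"
  shows "Re (\<Sum>i<n. \<Sum>j<n. cnj (v i) * a i j * v j) = 0"
proof -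
  let ?S = "\<Sum>i<n. \<Sum>j<n. cnj (v i) * a i j * v j"
  have "cnj ?S = (\<Sum>i<n. \<Sum>j<n. v i * cnj (a i j) * cnj (v j))"
    by (simp add: cnj_sum)
  also have "\<dots> = (\<Sum>j<n. \<Sum>i<n. v i * cnj (a i j) * cnj (v j))"
    by (rule sum.swap)
  also have "\<dots> = (\<Sum>j<n. \<Sum>i<n. - (cnj (v j) * a j i * v i))"
  proof (intro sum.cong refl)
    fix i j assume "i \<in> {..<n}" "j \<in> {..<n}"
    then show "v i * cnj (a i j) * cnj (v j) = - (cnj (v j) * a j i * v i)"
      using skew[of i j] by simp
  qed
  also have "\<dots> = - ?S"
    by (simp add: sum_negf)
  finally have "cnj ?S = - ?S" .
  moreover have "Re z = 0" if "cnj z = - z" for z :: complex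
    using that by (simp add: complex_eq_iff)
  ultimately show ?thesis by blast
qed

lemma skew_hermitian_shift_kernel:
  fixes A :: "complex mat"
  assumes A: "A \<in> carrier_mat n n"
    and skew: "\<And>i j. i < n \<Longrightarrow> j < n \<Longrightarrow> A $$ (j, i) = - cnj (A $$ (i, j))"
    and r: "r > 0" and v: "v \<in> carrier_vec n"
    and ker: "(complex_of_real r \<cdot>\<^sub>m 1\<^sub>m n - A) *\<^sub>v v = 0\<^sub>v n"
  shows "v = 0\<^sub>v n"
proof -
  have eig: "complex_of_real r * v $ i = (\<Sum>j<n. A $$ (i, j) * v $ j)" if "i < n" for i
    using shift_mult_vec_index[OF A v that, where s = "complex_of_real r"] ker that by simp
  have "(\<Sum>i<n. cnj (v $ i) * (complex_of_real r * v $ i))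
      = (\<Sum>i<n. \<Sum>j<n. cnj (v $ i) * A $$ (i, j) * v $ j)"
    using eig by (simp add: sum_distrib_left mult.assoc)
  then have "Re (\<Sum>i<n. cnj (v $ i) * (complex_of_real r * v $ i)) = 0"
    using skew_hermitian_form_Re_zero[of n "\<lambda>i j. A $$ (i, j)", OF skew] by simp
  moreover have "Re (cnj (v $ i) * (complex_of_real r * v $ i)) = r * (cmod (v $ i))\<^sup>2" for i
    by (simp add: cmod_power2 algebra_simps flip: power2_eq_square)
  ultimately have "r * (\<Sum>i<n. (cmod (v $ i))\<^sup>2) = 0"
    by (simp add: Re_sum sum_distrib_left)
  then have "\<forall>i\<in>{..<n}. (cmod (v $ i))\<^sup>2 = 0"
    using r by (subst sum_nonneg_eq_0_iff[symmetric]) auto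
  then show ?thesis
    using v by (intro eq_vecI) auto
qed

lemma mat_inverse_if_det_nonzero:
  fixes M :: "'a::field mat"
  assumes M: "M \<in> carrier_mat n n" and "det M \<noteq> 0"
  obtains B where "mat_inverse M = Some B" "B * M = 1\<^sub>m n" "B \<in> carrier_mat n n" "invertible_mat M"
proof -
  have "M \<in> Units (ring_mat TYPE('a) n ())"
    by (rule det_non_zero_imp_unit[OF M assms(2)])
  then obtain B where B: "mat_inverse M = Some B"
    using mat_inverse(1)[OF M, of "()"] by (cases "mat_inverse M") auto
  with mat_inverse(2)[OF M B] have "M * B = 1\<^sub>m n" "B * M = 1\<^sub>m n" "B \<in> carrier_mat n n"
    by auto
  moreover from this have "invertible_mat M"
    using M unfolding invertible_mat_def inverts_mat_def by auto
  ultimately show ?thesis using B that by blast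
qed

lemma resolvent_pos_real_inverse:
  assumes "r > 0"
  obtains B where "mat_inverse (resolvent_arg N h (complex_of_real r)) = Some B"
    "B * resolvent_arg N h (complex_of_real r) = 1\<^sub>m (N + 2)" "B \<in> carrier_mat (N + 2) (N + 2)"
    "invertible_mat (resolvent_arg N h (complex_of_real r))"
proof (rule mat_inverse_if_det_nonzero[OF resolvent_arg_carrier])
  have skew: "coupling_mat N h $$ (j, i) = - cnj (coupling_mat N h $$ (i, j))"
    if "i < N + 2" "j < N + 2" for i j
    using that by (simp add: coupling_mat_entry coupling_def)
  show "det (resolvent_arg N h (complex_of_real r)) \<noteq> 0"
    unfolding det_0_iff_vec_prod_zero[OF resolvent_arg_carrier]
    using skew_hermitian_shift_kernel[OF coupling_mat_carrier skew assms]
    unfolding resolvent_arg_def by blast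
qed (rule that)

lemma coupling_sum:
  assumes "i < N + 2" and "f (N + 2) = 0"
  shows "(\<Sum>j<N + 2. coupling h i j * f j) = h i * f (i + 1) - (if i > 0 then h (i - 1) * f (i - 1) else 0)"
proof -
  have "coupling h i j * f j = (if j = i + 1 then h i * f (i + 1) else 0)
      - (if j = i - 1 \<and> i > 0 then h (i - 1) * f (i - 1) else 0)" for j
    unfolding coupling_def by auto
  moreover have "(\<Sum>j<N + 2. if j = i + 1 then h i * f (i + 1) else 0) = h i * f (i + 1)"
    using assms by (cases "i + 1 = N + 2") auto
  moreover have "(\<Sum>j<N + 2. if j = i - 1 \<and> i > 0 then h (i - 1) * f (i - 1) else 0)
      = (if i > 0 then h (i - 1) * f (i - 1) else 0)"
    using assms(1) by (cases i) simp_all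
  ultimately show ?thesis by (simp add: sum_subtractf)
qed

text \<open>The first column of the adjugate of \<open>rI - A(h)\<close>, i.e. Cramer's rule for \<open>(rI - A(h)) y = e\<^sub>1\<close>.\<close>

definition resolvent_cofactor :: "nat \<Rightarrow> (nat \<Rightarrow> real) \<Rightarrow> real \<Rightarrow> nat \<Rightarrow> real" where
  "resolvent_cofactor N h r k = (-1)^k * (\<Prod>j<k. h j) * poly (continuant N h (k + 1)) r"

lemma resolvent_cofactor_row:
  assumes "i < N + 2"
  shows "r * resolvent_cofactor N h r i - (\<Sum>j<N + 2. coupling h i j * resolvent_cofactor N h r j)
    = (if i = 0 then poly (continuant N h 0) r else 0)"
proof -
  have "resolvent_cofactor N h r (N + 2) = 0"
    unfolding resolvent_cofactor_def by (simp add: continuant_beyond)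
  note sum = coupling_sum[OF assms, of "resolvent_cofactor N h r", OF this]
  show ?thesis
  proof (cases i)
    case 0
    then show ?thesis
      using continuant_rec[of 0 N h] unfolding sum
      by (simp add: resolvent_cofactor_def power2_eq_square numeral_2_eq_2)
  next
    case (Suc m)
    have "poly (continuant N h (Suc m)) r
        = r * poly (continuant N h (m + 2)) r + (h (Suc m))\<^sup>2 * poly (continuant N h (m + 3)) r"
      using continuant_rec[of "Suc m" N h] assms Suc by (simp add: eval_nat_numeral)
    then show ?thesis
      using Suc unfolding sum
      by (simp add: resolvent_cofactor_def eval_nat_numeral algebra_simps power2_eq_square)
  qed
qed

lemma transfer_fn_pos_real:
  assumes r: "r > 0"
  shows "complex_of_real (poly (continuant N h 0) r) * transfer_fn N h (complex_of_real r)
       = complex_of_real (- h 0 * poly (continuant N h 2) r)"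
proof -
  let ?n = "N + 2" and ?M = "resolvent_arg N h (complex_of_real r)"
  obtain B where B: "mat_inverse ?M = Some B" "B * ?M = 1\<^sub>m ?n" "B \<in> carrier_mat ?n ?n"
    using resolvent_pos_real_inverse[OF r] by metis
  define y where "y = vec ?n (\<lambda>k. complex_of_real (resolvent_cofactor N h r k))"
  define c where "c = complex_of_real (poly (continuant N h 0) r)"
  have y: "y \<in> carrier_vec ?n" unfolding y_def by simp
  have My: "?M *\<^sub>v y = c \<cdot>\<^sub>v unit_vec ?n 0"
  proof (rule eq_vecI)
    fix i assume "i < dim_vec (c \<cdot>\<^sub>v unit_vec ?n 0)"
    then have i: "i < ?n" by simp
    have "(?M *\<^sub>v y) $ i = complex_of_real (r * resolvent_cofactor N h r i
        - (\<Sum>j<?n. coupling h i j * resolvent_cofactor N h r j))"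
      using shift_mult_vec_index[OF coupling_mat_carrier y i] i
      unfolding resolvent_arg_def by (simp add: y_def coupling_mat_entry)
    then show "(?M *\<^sub>v y) $ i = (c \<cdot>\<^sub>v unit_vec ?n 0) $ i"
      unfolding resolvent_cofactor_row[OF i] using i by (simp add: c_def)
  qed (simp add: resolvent_arg_def coupling_mat_def)
  have "y = B *\<^sub>v (?M *\<^sub>v y)"
    using B(2,3) y resolvent_arg_carrier[of N h] by (metis assoc_mult_mat_vec one_mult_mat_vec)
  also have "\<dots> = c \<cdot>\<^sub>v (B *\<^sub>v unit_vec ?n 0)"
    unfolding My by (rule mult_mat_vec[OF B(3)]) simp
  finally have "y $ 1 = c * (B *\<^sub>v unit_vec ?n 0) $ 1"
    using B(3) by simp
  moreover have "transfer_fn N h (complex_of_real r) = (B *\<^sub>v unit_vec ?n 0) $ 1"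
    unfolding transfer_fn_def using B(1) by simp
  moreover have "y $ 1 = complex_of_real (- h 0 * poly (continuant N h 2) r)"
    unfolding y_def by (simp add: resolvent_cofactor_def numeral_2_eq_2)
  ultimately show ?thesis unfolding c_def by simp
qed

section \<open>Identifiability\<close>

lemma poly_eq_0_if_vanishes_on_pos:
  fixes p :: "real poly"
  assumes "\<And>r. r > 0 \<Longrightarrow> poly p r = 0"
  shows "p = 0"
proof (rule ccontr)
  assume "p \<noteq> 0"
  then have "finite {x. poly p x = 0}" by (rule poly_roots_finite)
  moreover have "{0<..<1::real} \<subseteq> {x. poly p x = 0}" using assms by auto
  ultimately have "finite {0<..<1::real}" by (rule finite_subset[rotated])
  then show False using infinite_Ioo[of 0 "1::real"] by simp
qed

lemma equal_transfer_same_tail_ratio: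
  assumes h0: "h' 0 = h 0" "h 0 \<noteq> 0"
    and G: "\<And>r. r > 0 \<Longrightarrow> transfer_fn N h (complex_of_real r) = transfer_fn N h' (complex_of_real r)"
  shows "same_tail_ratio N h h' 1"
proof -
  let ?D = "continuant N h" and ?D' = "continuant N h'"
  have "poly (?D' 0 * ?D 2 - ?D 0 * ?D' 2) r = 0" if r: "r > 0" for r
  proof -
    let ?G = "transfer_fn N h (complex_of_real r)"
    have t: "complex_of_real (poly (?D 0) r) * ?G = complex_of_real (- h 0 * poly (?D 2) r)"
      by (rule transfer_fn_pos_real[OF r])
    have t': "complex_of_real (poly (?D' 0) r) * ?G = complex_of_real (- h 0 * poly (?D' 2) r)"
      using transfer_fn_pos_real[OF r, of N h'] G[OF r] h0(1) by simp
    have "complex_of_real (poly (?D' 0) r) * complex_of_real (- h 0 * poly (?D 2) r)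
        = complex_of_real (poly (?D 0) r) * complex_of_real (- h 0 * poly (?D' 2) r)"
      unfolding t[symmetric] t'[symmetric] by (simp only: mult.left_commute)
    then have "poly (?D' 0) r * (- h 0 * poly (?D 2) r) = poly (?D 0) r * (- h 0 * poly (?D' 2) r)"
      by (simp only: of_real_mult[symmetric] of_real_eq_iff)
    then have "h 0 * (poly (?D' 0) r * poly (?D 2) r - poly (?D 0) r * poly (?D' 2) r) = 0"
      by (simp add: algebra_simps)
    then show ?thesis using h0(2) by simp
  qed
  then have "?D' 0 * ?D 2 - ?D 0 * ?D' 2 = 0"
    by (rule poly_eq_0_if_vanishes_on_pos)
  then have cross0: "?D' 0 * ?D 2 = ?D 0 * ?D' 2"
    by simp
  have "?D 0 = [:0, 1:] * ?D 1 + Polynomial.smult ((h 0)\<^sup>2) (?D 2)"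
       "?D' 0 = [:0, 1:] * ?D' 1 + Polynomial.smult ((h 0)\<^sup>2) (?D' 2)"
    using continuant_rec[of 0 N h] continuant_rec[of 0 N h'] h0(1) by (simp_all add: numeral_2_eq_2)
  with cross0 have "[:0, 1:] * (?D 1 * ?D' 2) = [:0, 1:] * (?D' 1 * ?D 2)"
    by (simp add: algebra_simps)
  then show ?thesis
    unfolding same_tail_ratio_def by (simp add: numeral_2_eq_2)
qed

lemma null_sets_coordinate_hyperplane:
  assumes "finite I" "j \<in> I"
  shows "{x \<in> space (Pi\<^sub>M I (\<lambda>_. lborel)). x j = (c::real)} \<in> null_sets (Pi\<^sub>M I (\<lambda>_. lborel))"
proof -
  interpret product_sigma_finite "\<lambda>_. lborel :: real measure"
    by (simp add: product_sigma_finite_def sigma_finite_lborel)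
  let ?E = "\<lambda>i. if i = j then {c} else (UNIV :: real set)"
  have eq: "{x \<in> space (Pi\<^sub>M I (\<lambda>_. lborel)). x j = c} = Pi\<^sub>E I ?E"
    using assms(2) by (auto simp: space_PiM PiE_iff extensional_def) (metis singletonD)
  have "emeasure (Pi\<^sub>M I (\<lambda>_. lborel)) (Pi\<^sub>E I ?E) = (\<Prod>i\<in>I. emeasure lborel (?E i))"
    using assms(1) by (intro emeasure_PiM) auto
  also have "\<dots> = 0"
    using assms by (intro prod_zero bexI[of _ j]) auto
  finally show ?thesis
    unfolding eq using assms(1) by (intro null_setsI sets_PiM_I_finite) auto
qed

lemma null_sets_coordinate_hyperplanes:
  assumes "finite I"
  shows "{x \<in> space (Pi\<^sub>M I (\<lambda>_. lborel)). \<exists>j\<in>I. x j = (0::real)} \<in> null_sets (Pi\<^sub>M I (\<lambda>_. lborel))"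
proof -
  have "{x \<in> space (Pi\<^sub>M I (\<lambda>_. lborel)). \<exists>j\<in>I. x j = (0::real)}
      = (\<Union>j\<in>I. {x \<in> space (Pi\<^sub>M I (\<lambda>_. lborel)). x j = 0})"
    by blast
  then show ?thesis
    using assms null_sets_coordinate_hyperplane[OF assms]
    by (simp add: null_sets_UN' countable_finite)
qed

theorem theorem1:
  fixes N :: nat
  assumes "N \<ge> 1"
  shows "\<exists>Z \<in> null_sets (Pi\<^sub>M {..N} (\<lambda>_. lborel)).
    \<forall>h h'. h \<in> space (Pi\<^sub>M {..N} (\<lambda>_. lborel)) \<longrightarrow>
           h' \<in> space (Pi\<^sub>M {..N} (\<lambda>_. lborel)) \<longrightarrow>
           h \<notin> Z \<longrightarrow> h' \<notin> Z \<longrightarrow>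
           h 0 = h' 0 \<longrightarrow> h 1 = h' 1 \<longrightarrow>
           (\<forall>s::complex. invertible_mat (resolvent_arg N h s) \<longrightarrow>
                invertible_mat (resolvent_arg N h' s) \<longrightarrow>
                transfer_fn N h s = transfer_fn N h' s) \<longrightarrow>
           (\<forall>i\<in>{2..N}. \<bar>h i\<bar> = \<bar>h' i\<bar>)"
proof (rule bexI[OF _ null_sets_coordinate_hyperplanes], intro allI impI ballI)
  fix h h' :: "nat \<Rightarrow> real" and i
  assume "h \<in> space (Pi\<^sub>M {..N} (\<lambda>_. lborel))"
    and "h \<notin> {x \<in> space (Pi\<^sub>M {..N} (\<lambda>_. lborel)). \<exists>j\<in>{..N}. x j = 0}"
  then have nz: "h j \<noteq> 0" if "j \<le> N" for j
    using that by auto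
  assume h0: "h 0 = h' 0"
    and G: "\<forall>s. invertible_mat (resolvent_arg N h s) \<longrightarrow>
                invertible_mat (resolvent_arg N h' s) \<longrightarrow>
                transfer_fn N h s = transfer_fn N h' s"
    and i: "i \<in> {2..N}"
  have "invertible_mat (resolvent_arg N g (complex_of_real r))" if "r > 0" for g r
    by (rule resolvent_pos_real_inverse[OF that])
  then have "transfer_fn N h (complex_of_real r) = transfer_fn N h' (complex_of_real r)" if "r > 0" for r
    using G that by blast
  then have "same_tail_ratio N h h' 1"
    using equal_transfer_same_tail_ratio[of h' h] h0 nz[of 0] by simp
  then have "same_tail_ratio N h h' i"
    using same_tail_ratio_propagate[of N h h' i] nz i by simp
  then have "(h i)\<^sup>2 = (h' i)\<^sup>2"
    using same_tail_ratio_step[of i N h h'] i by simp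
  then show "\<bar>h i\<bar> = \<bar>h' i\<bar>"
    by (metis abs_power2 power2_abs real_sqrt_abs)
qed simp

end
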